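(* For every $\varepsilon>0$ the series $$\sum_{\boldsymbol{\mathcal E}\in\operatorname{Div}_{\mathrm{eff}}(\mathscr C)^7}|\mu_S(\boldsymbol{\mathcal E})|\,q^{-(\frac12+\varepsilon)\left[\deg\mathcal E_0+\sum_{i=1}^3\deg\mathcal E_i+\sum_{i=1}^3\deg\mathcal F_i\right]}$$ converges.
   Context: $k$ is a finite field with $q$ elements, $\mathscr C$ a smooth projective geometrically integral curve over $k$, $\operatorname{Div}_{\mathrm{eff}}(\mathscr C)$ its monoid of effective divisors. Elements of $\operatorname{Div}_{\mathrm{eff}}(\mathscr C)^7$ are written $\boldsymbol{\mathcal E}=(\mathcal E_0,\mathcal E_1,\mathcal E_2,\mathcal E_3,\mathcal F_1,\mathcal F_2,\mathcal F_3)$. Let $\operatorname{Div}_{S,\mathrm{prim}}$ be the set of $\boldsymbol{\mathcal E}$ such that the gcd (at each closed point, the minimum of multiplicities) of the seven effective divisors $\sum_{j\neq i}\mathcal E_j+\sum_{j=1}^3\mathcal F_j$ ($i=1,2,3$), $\mathcal E_0+\sum_{j\neq i}(\mathcal E_j+\mathcal F_j)$ ($i=1,2,3$) and $\mathcal E_0+\sum_{j=1}^3\mathcal E_j$ is $0$ (indices $j$ in $\{1,2,3\}$). $\mu_S:\operatorname{Div}_{\mathrm{eff}}(\mathscr C)^7\to\mathbf C$ is the unique function with $\mathbf 1_{\operatorname{Div}_{S,\mathrm{prim}}}(\boldsymbol{\mathcal D})=\sum_{0\leq\boldsymbol{\mathcal E}\leq\boldsymbol{\mathcal D}}\mu_S(\boldsymbol{\mathcal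 E})$ for all $\boldsymbol{\mathcal D}$ (componentwise inequalities). *)

theory Defs
  imports "HOL-Analysis.Analysis" "HOL-Computational_Algebra.Primes"
begin

text \<open>Abstract model of the closed points of a smooth projective geometrically
integral curve over a finite field with q elements: a type 'p of closed points
with a degree map. The only properties of the curve used are encoded by
curve_points below (rationality + Riemann hypothesis of the zeta function,
i.e. the Weil formula for the number of points over extensions).\<close>

definition curve_points :: "nat \<Rightarrow> ('p \<Rightarrow> nat) \<Rightarrow> bool" where
  "curve_points q dg \<longleftrightarrow>
     (\<exists>p n. prime p \<and> n \<ge> 1 \<and> q = p ^ n) \<and>
     (\<forall>P. dg P \<ge> 1) \<and>
     (\<forall>d. finite {P. dg P = d}) \<and>
     (\<exists>\<omega> :: complex list. even (length \<omega>) \<and>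
        (\<forall>w\<in>set \<omega>. cmod w = sqrt (real q)) \<and>
        (\<forall>n\<ge>1. of_nat (\<Sum>d | d dvd n. d * card {P. dg P = d})
               = of_nat (q ^ n) + 1 - (\<Sum>w\<leftarrow>\<omega>. w ^ n)))"

definition eff_div :: "('p \<Rightarrow> nat) \<Rightarrow> bool" where
  "eff_div D \<longleftrightarrow> finite {P. D P \<noteq> 0}"

definition div_deg :: "('p \<Rightarrow> nat) \<Rightarrow> ('p \<Rightarrow> nat) \<Rightarrow> nat" where
  "div_deg dg D = (\<Sum>P | D P \<noteq> 0. dg P * D P)"

text \<open>7-tuples of effective divisors, indexed 0..6:
  index 0 = E_0, indices 1,2,3 = E_1,E_2,E_3, indices 4,5,6 = F_1,F_2,F_3;
  components with index \<ge> 7 are zero.\<close>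
definition Div7 :: "(nat \<Rightarrow> 'p \<Rightarrow> nat) set" where
  "Div7 = {E. (\<forall>i<7. eff_div (E i)) \<and> (\<forall>i\<ge>7. E i = (\<lambda>_. 0))}"

definition tuple_le :: "(nat \<Rightarrow> 'p \<Rightarrow> nat) \<Rightarrow> (nat \<Rightarrow> 'p \<Rightarrow> nat) \<Rightarrow> bool" where
  "tuple_le E D \<longleftrightarrow> (\<forall>i P. E i P \<le> D i P)"

text \<open>The seven divisors whose gcd is taken (as functions of the point).\<close>
definition S_forms :: "(nat \<Rightarrow> 'p \<Rightarrow> nat) \<Rightarrow> ('p \<Rightarrow> nat) list" where
  "S_forms E =
    map (\<lambda>i. (\<lambda>P. (\<Sum>j\<in>{1,2,3} - {i}. E j P) + E 4 P + E 5 P + E 6 P)) [1,2,3] @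
    map (\<lambda>i. (\<lambda>P. E 0 P + (\<Sum>j\<in>{1,2,3} - {i}. E j P + E (j+3) P))) [1,2,3] @
    [(\<lambda>P. E 0 P + E 1 P + E 2 P + E 3 P)]"

text \<open>gcd of the seven divisors is 0: at every closed point the minimum of
  the multiplicities is 0.\<close>
definition Div_S_prim :: "(nat \<Rightarrow> 'p \<Rightarrow> nat) set" where
  "Div_S_prim = {E \<in> Div7. \<forall>P. Min ((\<lambda>f. f P) ` set (S_forms E)) = 0}"

definition mu_S :: "(nat \<Rightarrow> 'p \<Rightarrow> nat) \<Rightarrow> complex" where
  "mu_S = (THE f. (\<forall>D\<in>Div7. (if D \<in> Div_S_prim then 1 else 0)
                      = (\<Sum>E | tuple_le E D. f E))
               \<and> (\<forall>D. D \<notin> Div7 \<longrightarrow> f D = 0))"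

definition total_deg :: "('p \<Rightarrow> nat) \<Rightarrow> (nat \<Rightarrow> 'p \<Rightarrow> nat) \<Rightarrow> nat" where
  "total_deg dg E = (\<Sum>i<7. div_deg dg (E i))"

end

theory Submission
  imports Defs
begin

text \<open>
  The function mu_S is multiplicative: it is the product over closed points P of a local
  factor depending only on the column of multiplicities at P, namely the Moebius inversion,
  on the Boolean lattice of subsets of the seven coordinates, of the indicator of the
  patterns at which one of the seven forms vanishes; it is supported on 0/1 columns.
  Every single coordinate is such a pattern, so the local factor vanishes in total degree
  one, and the Euler factor of the series at P is 1 + O(q^(-(1 + 2 eps) deg P)).
  By the Riemann hypothesis for the curve there are O(q^d) points of degree d, so the sum
  of q^(-(1 + 2 eps) deg P) over all P converges, and every finite partial sum of the series
  is bounded by the exponential of a constant multiple of it.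
\<close>

lemma finite_fun_le:
  fixes w :: "'a \<Rightarrow> nat"
  assumes "finite {x. w x \<noteq> 0}"
  shows "finite {v. v \<le> w}"
proof (rule finite_subset)
  let ?S = "{x. w x \<noteq> 0}"
  show "{v. v \<le> w} \<subseteq> {v. \<forall>x. (x \<in> ?S \<longrightarrow> v x \<in> (\<Union>y\<in>?S. {..w y})) \<and> (x \<notin> ?S \<longrightarrow> v x = 0)}"
    by (auto simp: le_fun_def) (metis le_zero_eq)
  show "finite \<dots>" by (rule finite_set_of_finite_funs) (use assms in auto)
qed

lemma sum_below_unique:
  fixes f g :: "'a::order \<Rightarrow> 'b::ab_group_add"
  assumes fin: "\<And>D. D \<in> X \<Longrightarrow> finite {E. E \<le> D}"
    and down: "\<And>D E. D \<in> X \<Longrightarrow> E \<le> D \<Longrightarrow> E \<in> X"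
    and eq: "\<And>D. D \<in> X \<Longrightarrow> (\<Sum>E | E \<le> D. f E) = (\<Sum>E | E \<le> D. g E)"
    and "D \<in> X"
  shows "f D = g D"
  using \<open>D \<in> X\<close>
proof (induction D rule: measure_induct_rule[where f = "\<lambda>D. card {E. E \<le> D}"])
  case (less D)
  have below: "{E. E \<le> D} = insert D {E. E < D}" by auto
  have "f E = g E" if "E < D" for E
  proof (rule less.IH)
    show "E \<in> X" using down less.prems \<open>E < D\<close> by auto
    have "D \<notin> {E'. E' \<le> E}" using \<open>E < D\<close> by auto
    then have "{E'. E' \<le> E} \<subset> {E'. E' \<le> D}" using \<open>E < D\<close> by auto
    then show "card {E'. E' \<le> E} < card {E'. E' \<le> D}"
      by (rule psubset_card_mono[OF fin[OF less.prems]])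
  qed
  then have "(\<Sum>E | E < D. f E) = (\<Sum>E | E < D. g E)" by simp
  moreover have "finite {E. E < D}" using fin[OF less.prems] by (simp add: below)
  ultimately show "f D = g D" using eq[OF less.prems] by (simp add: below)
qed

lemma sum_below_prod_columns:
  fixes D :: "'i \<Rightarrow> 'a \<Rightarrow> nat" and h :: "'a \<Rightarrow> ('i \<Rightarrow> nat) \<Rightarrow> 'b::comm_semiring_1"
  assumes A: "finite A" and D_A: "\<And>i P. P \<notin> A \<Longrightarrow> D i P = 0"
    and fin: "\<And>P. P \<in> A \<Longrightarrow> finite {v. v \<le> (\<lambda>i. D i P)}"
  shows "(\<Sum>E | E \<le> D. \<Prod>P\<in>A. h P (\<lambda>i. E i P)) = (\<Prod>P\<in>A. \<Sum>v | v \<le> (\<lambda>i. D i P). h P v)"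
proof -
  let ?B = "\<lambda>P. {v. v \<le> (\<lambda>i. D i P)}"
  have "bij_betw (\<lambda>E. \<lambda>P\<in>A. \<lambda>i. E i P) {E. E \<le> D} (PiE A ?B)"
  proof (rule bij_betw_byWitness[where f' = "\<lambda>w i P. if P \<in> A then w P i else 0"])
    show "\<forall>E\<in>{E. E \<le> D}. (\<lambda>i P. if P \<in> A then (\<lambda>P\<in>A. \<lambda>i. E i P) P i else 0) = E"
      using D_A by (auto simp: le_fun_def fun_eq_iff) (metis le_zero_eq)
    show "\<forall>w\<in>PiE A ?B. (\<lambda>P\<in>A. \<lambda>i. if P \<in> A then w P i else 0) = w"
      by (auto simp: PiE_iff extensional_def fun_eq_iff)
    show "(\<lambda>E. \<lambda>P\<in>A. \<lambda>i. E i P) ` {E. E \<le> D} \<subseteq> PiE A ?B"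
      by (auto simp: le_fun_def)
    show "(\<lambda>w i P. if P \<in> A then w P i else 0) ` PiE A ?B \<subseteq> {E. E \<le> D}"
      by (auto simp: le_fun_def PiE_iff)
  qed
  then have "(\<Sum>w\<in>PiE A ?B. \<Prod>P\<in>A. h P (w P))
      = (\<Sum>E | E \<le> D. \<Prod>P\<in>A. h P ((\<lambda>P\<in>A. \<lambda>i. E i P) P))"
    by (rule sum.reindex_bij_betw[symmetric])
  then have "(\<Sum>E | E \<le> D. \<Prod>P\<in>A. h P (\<lambda>i. E i P)) = (\<Sum>w\<in>PiE A ?B. \<Prod>P\<in>A. h P (w P))"
    by simp
  also have "\<dots> = (\<Prod>P\<in>A. \<Sum>v\<in>?B P. h P v)"
    by (rule prod_sum_PiE[OF A fin, symmetric])
  finally show ?thesis .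
qed

definition subset_mobius :: "('a set \<Rightarrow> 'b::comm_ring_1) \<Rightarrow> 'a set \<Rightarrow> 'b" where
  "subset_mobius g T = (-1) ^ card T * (\<Sum>U\<in>Pow T. (-1) ^ card U * g U)"

lemma sum_subset_mobius:
  assumes "finite S"
  shows "(\<Sum>T\<in>Pow S. subset_mobius g T) = g S"
  using inclusion_exclusion_symmetric[where g = "\<lambda>T. \<Sum>U\<in>Pow T. (-1) ^ card U * g U", OF _ assms]
  by (simp add: subset_mobius_def)

lemma subset_mobius_empty [simp]: "subset_mobius g {} = g {}"
  by (simp add: subset_mobius_def)

lemma subset_mobius_singleton: "subset_mobius g {i} = g {i} - g {}"
proof -
  have "Pow {i} = {{}, {i}}" by blast
  then show ?thesis by (simp add: subset_mobius_def algebra_simps)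
qed

definition sqfree_mobius :: "('a set \<Rightarrow> 'b::comm_ring_1) \<Rightarrow> ('a \<Rightarrow> nat) \<Rightarrow> 'b" where
  "sqfree_mobius g v = (if \<forall>i. v i \<le> 1 then subset_mobius g {i. v i \<noteq> 0} else 0)"

lemma sqfree_mobius_zero [simp]: "sqfree_mobius g (\<lambda>_. 0) = g {}"
  by (simp add: sqfree_mobius_def)

lemma sum_sqfree_mobius:
  fixes w :: "'a \<Rightarrow> nat"
  assumes fin: "finite {i. w i \<noteq> 0}"
  shows "(\<Sum>v | v \<le> w. sqfree_mobius g v) = g {i. w i \<noteq> 0}"
proof -
  let ?S = "{i. w i \<noteq> 0}" and ?ind = "\<lambda>T i. of_bool (i \<in> T) :: nat"
  have inj: "inj_on ?ind (Pow ?S)"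
    by (rule inj_onI) (metis (mono_tags) of_bool_eq_iff subsetI subset_antisym)
  have "(\<Sum>v | v \<le> w. sqfree_mobius g v) = (\<Sum>v\<in>?ind ` Pow ?S. sqfree_mobius g v)"
  proof (rule sum.mono_neutral_right)
    show "finite {v. v \<le> w}" by (rule finite_fun_le[OF fin])
    show "?ind ` Pow ?S \<subseteq> {v. v \<le> w}" by (auto simp: le_fun_def)
    have "v \<in> ?ind ` Pow ?S" if "v \<le> w" "\<forall>i. v i \<le> 1" for v
    proof
      show "v = ?ind {i. v i \<noteq> 0}" using that(2) by (force simp: le_Suc_eq)
      show "{i. v i \<noteq> 0} \<in> Pow ?S" using that(1) by (auto simp: le_fun_def) (metis gr0I le_zero_eq)
    qed
    then show "\<forall>v\<in>{v. v \<le> w} - ?ind ` Pow ?S. sqfree_mobius g v = 0"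
      by (auto simp: sqfree_mobius_def)
  qed
  also have "\<dots> = (\<Sum>T\<in>Pow ?S. subset_mobius g T)"
    by (rule sum.reindex_cong[OF inj refl]) (simp add: sqfree_mobius_def)
  also have "\<dots> = g ?S" by (rule sum_subset_mobius[OF fin])
  finally show ?thesis .
qed

lemma sum_sqfree_mobius_power_le:
  fixes g :: "nat set \<Rightarrow> int" and x :: real
  assumes g_empty: "g {} = 1" and g_singleton: "\<And>i. i < n \<Longrightarrow> g {i} = g {}"
    and x: "0 \<le> x" "x \<le> 1"
  shows "(\<Sum>v | v \<le> (\<lambda>i. of_bool (i < n)). \<bar>real_of_int (sqfree_mobius g v)\<bar> * x ^ (\<Sum>i<n. v i))
         \<le> 1 + (\<Sum>v | v \<le> (\<lambda>i. of_bool (i < n)). \<bar>real_of_int (sqfree_mobius g v)\<bar>) * x\<^sup>2"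
    (is "(\<Sum>v\<in>?V. ?m v * x ^ ?wt v) \<le> 1 + (\<Sum>v\<in>?V. ?m v) * x\<^sup>2")
proof -
  have fin: "finite ?V" by (rule finite_fun_le) simp
  have term_le: "?m v * x ^ ?wt v \<le> of_bool (v = (\<lambda>_. 0)) + ?m v * x\<^sup>2" if "v \<in> ?V" for v
  proof (cases "v = (\<lambda>_. 0) \<or> sqfree_mobius g v = 0")
    case True
    then show ?thesis using g_empty x by auto
  next
    case False
    let ?T = "{i. v i \<noteq> 0}"
    have v01: "\<forall>i. v i \<le> 1" and mob: "sqfree_mobius g v = subset_mobius g ?T"
      using False by (auto simp: sqfree_mobius_def split: if_splits)
    have T_n: "?T \<subseteq> {..<n}"
    proof
      fix i assume "i \<in> ?T"
      moreover have "v i \<le> of_bool (i < n)" using that by (simp add: le_fun_def)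
      ultimately show "i \<in> {..<n}" by (cases "i < n") auto
    qed
    have "card ?T \<noteq> 0"
      using False finite_subset[OF T_n] by (auto simp: fun_eq_iff)
    moreover have "card ?T \<noteq> 1"
    proof
      assume "card ?T = 1"
      then obtain j where "?T = {j}" by (rule card_1_singletonE)
      moreover have "j < n" using T_n \<open>?T = {j}\<close> by auto
      ultimately show False using False mob g_singleton by (simp add: subset_mobius_singleton)
    qed
    ultimately have "2 \<le> card ?T" by linarith
    moreover have "?wt v = card ?T"
    proof -
      have "v i = of_bool (i \<in> ?T)" for i using v01[rule_format, of i] by auto
      then have "?wt v = (\<Sum>i<n. of_bool (i \<in> ?T))" by simp
      also have "\<dots> = card ?T" using T_n by (simp add: Int_absorb1)
      finally show ?thesis .
    qed
    ultimately have "x ^ ?wt v \<le> x\<^sup>2" using x by (simp add: power_decreasing)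
    then have "?m v * x ^ ?wt v \<le> ?m v * x\<^sup>2" by (rule mult_left_mono) simp
    then show ?thesis using False by simp
  qed
  have "(\<Sum>v\<in>?V. ?m v * x ^ ?wt v) \<le> (\<Sum>v\<in>?V. of_bool (v = (\<lambda>_. 0)) + ?m v * x\<^sup>2)"
    by (rule sum_mono[OF term_le])
  also have "\<dots> = 1 + (\<Sum>v\<in>?V. ?m v) * x\<^sup>2"
    using fin by (simp add: sum.distrib sum_distrib_right le_fun_def)
  finally show ?thesis .
qed

text \<open>The seven sets are the index sets of the seven forms of S_forms (0--3 for E_0--E_3,
  4--6 for F_1--F_3), so a form has multiplicity 0 at P exactly when its index set misses the
  set of indices of nonzero multiplicities at P.\<close>
definition prim_pattern :: "nat set \<Rightarrow> bool" where
  "prim_pattern T \<longleftrightarrow>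
     (\<exists>K\<in>{{2,3,4,5,6}, {1,3,4,5,6}, {1,2,4,5,6}, {0,2,3,5,6}, {0,1,3,4,6}, {0,1,2,4,5}, {0,1,2,3}}.
        K \<inter> T = {})"

lemma prim_pattern_empty [simp]: "prim_pattern {}"
  unfolding prim_pattern_def by (rule bexI[of _ "{0,1,2,3}"]) auto

lemma prim_pattern_singleton: "prim_pattern {i}"
proof -
  have "{0,1,2,3} \<inter> {i} = {} \<or> {0,1,2,4,5} \<inter> {i} = {} \<or> {0,1,3,4,6} \<inter> {i} = {}
        \<or> {2,3,4,5,6} \<inter> {i} = {}"
    by auto
  then show ?thesis
    unfolding prim_pattern_def by (elim disjE) (rule bexI, assumption, simp)+
qed

lemma Min_S_forms_eq_0_iff:
  "Min ((\<lambda>f. f P) ` set (S_forms E)) = 0 \<longleftrightarrow> prim_pattern {i. E i P \<noteq> 0}"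
proof -
  have fin: "finite ((\<lambda>f. f P) ` set (S_forms E))" "(\<lambda>f. f P) ` set (S_forms E) \<noteq> {}"
    by (auto simp: S_forms_def)
  have "Min ((\<lambda>f. f P) ` set (S_forms E)) = 0 \<longleftrightarrow> 0 \<in> (\<lambda>f. f P) ` set (S_forms E)"
    using Min_in[OF fin] Min_le[OF fin(1)] by (metis le_zero_eq)
  also have "\<dots> \<longleftrightarrow> prim_pattern {i. E i P \<noteq> 0}"
    by (auto simp: S_forms_def prim_pattern_def insert_Diff_if)
  finally show ?thesis .
qed

lemma tuple_le_iff_le: "tuple_le E D \<longleftrightarrow> E \<le> D"
  by (simp add: tuple_le_def le_fun_def)

definition div_support :: "(nat \<Rightarrow> 'p \<Rightarrow> nat) \<Rightarrow> 'p set" where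
  "div_support E = {P. \<exists>i. E i P \<noteq> 0}"

lemma Div7_vanish: "E \<in> Div7 \<Longrightarrow> 7 \<le> i \<Longrightarrow> E i P = 0"
  by (simp add: Div7_def)

lemma div_support_subset:
  assumes "E \<in> Div7"
  shows "div_support E \<subseteq> (\<Union>i<7. {P. E i P \<noteq> 0})"
proof
  fix P assume "P \<in> div_support E"
  then obtain i where i: "E i P \<noteq> 0" by (auto simp: div_support_def)
  with Div7_vanish[OF assms] have "i < 7" by (meson not_less)
  with i show "P \<in> (\<Union>i<7. {P. E i P \<noteq> 0})" by blast
qed

lemma finite_div_support:
  assumes "E \<in> Div7"
  shows "finite (div_support E)"
  using assms by (intro finite_subset[OF div_support_subset[OF assms]]) (simp add: Div7_def eff_div_def)

lemma finite_column_support: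
  assumes "E \<in> Div7"
  shows "finite {i. E i P \<noteq> 0}"
proof (rule finite_subset)
  show "{i. E i P \<noteq> 0} \<subseteq> {..<7}"
    using Div7_vanish[OF assms] by (force simp: not_less[symmetric])
qed simp

lemma div_support_mono:
  assumes "E \<le> D"
  shows "div_support E \<subseteq> div_support D"
proof
  fix P assume "P \<in> div_support E"
  then obtain i where "E i P \<noteq> 0" by (auto simp: div_support_def)
  moreover have "E i P \<le> D i P" using assms by (simp add: le_fun_def)
  ultimately have "D i P \<noteq> 0" by linarith
  then show "P \<in> div_support D" by (auto simp: div_support_def)
qed

lemma Div7_downward_closed:
  assumes D: "D \<in> Div7" and "E \<le> D"
  shows "E \<in> Div7"
proof -
  have le: "E i P \<le> D i P" for i P using \<open>E \<le> D\<close> by (simp add: le_fun_def)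
  have "finite {P. E i P \<noteq> 0}" if "i < 7" for i
  proof (rule finite_subset)
    show "{P. E i P \<noteq> 0} \<subseteq> {P. D i P \<noteq> 0}" using le[of i] by (auto intro: less_le_trans)
    show "finite {P. D i P \<noteq> 0}" using D that by (simp add: Div7_def eff_div_def)
  qed
  moreover have "E i = (\<lambda>_. 0)" if "7 \<le> i" for i
  proof
    fix P show "E i P = 0" using le[of i P] Div7_vanish[OF D that, of P] by linarith
  qed
  ultimately show ?thesis by (simp add: Div7_def eff_div_def)
qed

lemma finite_Div7_below:
  assumes D: "D \<in> Div7"
  shows "finite {E. E \<le> D}"
proof (rule finite_subset)
  let ?B = "\<Union>i<7::nat. {e. e \<le> D i}"
  show "{E. E \<le> D} \<subseteq> {E. \<forall>i. (i \<in> {..<7} \<longrightarrow> E i \<in> ?B) \<and> (i \<notin> {..<7::nat} \<longrightarrow> E i = (\<lambda>_. 0))}"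
  proof (intro subsetI CollectI allI conjI impI)
    fix E i assume "E \<in> {E. E \<le> D}"
    then have "E \<le> D" "E \<in> Div7" using Div7_downward_closed[OF D] by auto
    show "i \<in> {..<7} \<Longrightarrow> E i \<in> ?B" using \<open>E \<le> D\<close> by (auto simp: le_fun_def)
    show "i \<notin> {..<7} \<Longrightarrow> E i = (\<lambda>_. 0)" using \<open>E \<in> Div7\<close> by (simp add: Div7_def)
  qed
  have "finite {e. e \<le> D i}" if "i < 7" for i
    using D that by (intro finite_fun_le) (simp add: Div7_def eff_div_def)
  then show "finite {E. \<forall>i. (i \<in> {..<7} \<longrightarrow> E i \<in> ?B) \<and> (i \<notin> {..<7::nat} \<longrightarrow> E i = (\<lambda>_. 0))}"
    by (intro finite_set_of_finite_funs) auto
qed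

definition local_mu :: "(nat \<Rightarrow> nat) \<Rightarrow> int" where
  "local_mu = sqfree_mobius (\<lambda>T. of_bool (prim_pattern T))"

definition mu_product :: "(nat \<Rightarrow> 'p \<Rightarrow> nat) \<Rightarrow> complex" where
  "mu_product E = (if E \<in> Div7 then of_int (\<Prod>P\<in>div_support E. local_mu (\<lambda>i. E i P)) else 0)"

lemma mu_product_eq_prod:
  assumes E: "E \<in> Div7" and A: "finite A" "div_support E \<subseteq> A"
  shows "mu_product E = of_int (\<Prod>P\<in>A. local_mu (\<lambda>i. E i P))"
proof -
  have "(\<lambda>i. E i P) = (\<lambda>_. 0)" if "P \<notin> div_support E" for P
    using that by (auto simp: div_support_def)
  then have "(\<Prod>P\<in>div_support E. local_mu (\<lambda>i. E i P)) = (\<Prod>P\<in>A. local_mu (\<lambda>i. E i P))"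
    by (intro prod.mono_neutral_left A) (simp add: local_mu_def)
  then show ?thesis using E by (simp add: mu_product_def)
qed

lemma sum_mu_product:
  assumes D: "D \<in> Div7"
  shows "(\<Sum>E | E \<le> D. mu_product E) = of_bool (D \<in> Div_S_prim)"
proof -
  let ?A = "div_support D"
  have A: "finite ?A" by (rule finite_div_support[OF D])
  have "(\<Sum>E | E \<le> D. mu_product E) = (\<Sum>E | E \<le> D. of_int (\<Prod>P\<in>?A. local_mu (\<lambda>i. E i P)))"
    using D A by (intro sum.cong refl mu_product_eq_prod)
      (auto intro: Div7_downward_closed dest: div_support_mono)
  also have "\<dots> = of_int (\<Prod>P\<in>?A. \<Sum>v | v \<le> (\<lambda>i. D i P). local_mu v)"
    using A finite_column_support[OF D]
    by (subst sum_below_prod_columns[symmetric]) (auto simp: div_support_def intro: finite_fun_le)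
  also have "\<dots> = of_int (\<Prod>P\<in>?A. of_bool (prim_pattern {i. D i P \<noteq> 0}))"
    using finite_column_support[OF D] by (simp add: local_mu_def sum_sqfree_mobius)
  also have "\<dots> = of_bool (\<forall>P. prim_pattern {i. D i P \<noteq> 0})"
  proof -
    have "prim_pattern {i. D i P \<noteq> 0}" if "P \<notin> ?A" for P
      using that by (simp add: div_support_def)
    then have "(\<forall>P\<in>?A. prim_pattern {i. D i P \<noteq> 0}) \<longleftrightarrow> (\<forall>P. prim_pattern {i. D i P \<noteq> 0})"
      by blast
    then show ?thesis using A by auto
  qed
  also have "\<dots> = of_bool (D \<in> Div_S_prim)"
    using D by (simp add: Div_S_prim_def Min_S_forms_eq_0_iff)
  finally show ?thesis .
qed

lemma mu_S_eq_mu_product: "mu_S = mu_product"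
  unfolding mu_S_def
proof (rule the_equality)
  show "(\<forall>D\<in>Div7. (if D \<in> Div_S_prim then 1 else 0) = (\<Sum>E | tuple_le E D. mu_product E))
        \<and> (\<forall>D. D \<notin> Div7 \<longrightarrow> mu_product D = 0)"
    by (intro conjI ballI allI impI) (simp add: tuple_le_iff_le sum_mu_product, simp add: mu_product_def)
next
  fix f :: "(nat \<Rightarrow> 'p \<Rightarrow> nat) \<Rightarrow> complex"
  assume f: "(\<forall>D\<in>Div7. (if D \<in> Div_S_prim then 1 else 0) = (\<Sum>E | tuple_le E D. f E))
             \<and> (\<forall>D. D \<notin> Div7 \<longrightarrow> f D = 0)"
  show "f = mu_product"
  proof
    fix D :: "nat \<Rightarrow> 'p \<Rightarrow> nat"
    show "f D = mu_product D"
    proof (cases "D \<in> Div7")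
      case True
      have "(\<Sum>E | E \<le> D'. f E) = (\<Sum>E | E \<le> D'. mu_product E)" if "D' \<in> Div7" for D'
      proof -
        have "(\<Sum>E | E \<le> D'. f E) = (if D' \<in> Div_S_prim then 1 else 0)"
          using f that by (simp add: tuple_le_iff_le)
        also have "\<dots> = (\<Sum>E | E \<le> D'. mu_product E)" using sum_mu_product[OF that] by simp
        finally show ?thesis .
      qed
      from sum_below_unique[OF finite_Div7_below Div7_downward_closed this True]
      show ?thesis .
    next
      case False
      then show ?thesis using f by (simp add: mu_product_def)
    qed
  qed
qed

lemma total_deg_eq_sum_columns:
  assumes A: "finite A" "div_support E \<subseteq> A"
  shows "total_deg dg E = (\<Sum>P\<in>A. dg P * (\<Sum>i<7. E i P))"
proof -
  have "div_deg dg (E i) = (\<Sum>P\<in>A. dg P * E i P)" for i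
  proof -
    have "{P. E i P \<noteq> 0} \<subseteq> A" using A(2) by (auto simp: div_support_def)
    then show ?thesis unfolding div_deg_def by (intro sum.mono_neutral_left A(1)) auto
  qed
  then have "total_deg dg E = (\<Sum>i<7. \<Sum>P\<in>A. dg P * E i P)" by (simp add: total_deg_def)
  also have "\<dots> = (\<Sum>P\<in>A. dg P * (\<Sum>i<7. E i P))" by (subst sum.swap) (simp add: sum_distrib_left)
  finally show ?thesis .
qed

lemma norm_mu_S_weight_eq_prod:
  assumes E: "E \<in> Div7" and A: "finite A" "div_support E \<subseteq> A" and q: "0 < q"
  shows "norm (mu_S E) * real q powr (- s * real (total_deg dg E))
       = (\<Prod>P\<in>A. \<bar>real_of_int (local_mu (\<lambda>i. E i P))\<bar> * (real q powr (- s * real (dg P))) ^ (\<Sum>i<7. E i P))"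
proof -
  have "norm (mu_S E) = (\<Prod>P\<in>A. \<bar>real_of_int (local_mu (\<lambda>i. E i P))\<bar>)"
    by (simp add: mu_S_eq_mu_product mu_product_eq_prod[OF E A] prod_norm[symmetric])
  moreover have "real q powr (- s * real (total_deg dg E))
      = (\<Prod>P\<in>A. (real q powr (- s * real (dg P))) ^ (\<Sum>i<7. E i P))"
  proof -
    have "- s * real (total_deg dg E) = (\<Sum>P\<in>A. real (\<Sum>i<7. E i P) * (- s * real (dg P)))"
      by (simp add: total_deg_eq_sum_columns[OF A] sum_distrib_left algebra_simps)
    then have "real q powr (- s * real (total_deg dg E))
        = (\<Prod>P\<in>A. real q powr (real (\<Sum>i<7. E i P) * (- s * real (dg P))))"
      using q by (simp add: powr_sum)
    then show ?thesis using q by (simp add: powr_power)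
  qed
  ultimately show ?thesis by (simp add: prod.distrib)
qed

lemma mu_S_eq_0_if_not_squarefree:
  assumes "1 < E i P"
  shows "mu_S E = 0"
proof (cases "E \<in> Div7")
  case True
  have "\<exists>j. \<not> E j P \<le> 1" using assms by (auto simp: not_le)
  then have "local_mu (\<lambda>i. E i P) = 0" by (auto simp: local_mu_def sqfree_mobius_def)
  moreover have "P \<in> div_support E"
    using assms by (auto simp: div_support_def intro: exI[of _ i])
  ultimately show ?thesis
    using finite_div_support[OF True] by (auto simp: mu_S_eq_mu_product mu_product_def)
next
  case False
  then show ?thesis by (simp add: mu_S_eq_mu_product mu_product_def)
qed

lemma partial_sum_mu_S_le_euler_product:
  fixes F :: "(nat \<Rightarrow> 'p \<Rightarrow> nat) set"
  assumes F: "F \<subseteq> Div7" "finite F" and A: "finite A" "\<And>E. E \<in> F \<Longrightarrow> div_support E \<subseteq> A"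
    and q: "0 < q"
  shows "(\<Sum>E\<in>F. norm (mu_S E) * real q powr (- s * real (total_deg dg E)))
    \<le> (\<Prod>P\<in>A. \<Sum>v | v \<le> (\<lambda>i. of_bool (i < 7)).
          \<bar>real_of_int (local_mu v)\<bar> * (real q powr (- s * real (dg P))) ^ (\<Sum>i<7. v i))"
    (is "(\<Sum>E\<in>F. ?t E) \<le> (\<Prod>P\<in>A. \<Sum>v | v \<le> _. ?h P v)")
proof -
  \<comment> \<open>every summand with mu_S E \<noteq> 0 lies below D, and the sum over all E \<le> D factors over A\<close>
  define D :: "nat \<Rightarrow> 'p \<Rightarrow> nat" where "D = (\<lambda>i P. of_bool (i < 7 \<and> P \<in> A))"
  have D: "D \<in> Div7"
  proof -
    have "finite {P. D i P \<noteq> 0}" for i by (rule finite_subset[OF _ A(1)]) (auto simp: D_def)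
    moreover have "D i = (\<lambda>_. 0)" if "7 \<le> i" for i using that by (simp add: D_def fun_eq_iff)
    ultimately show ?thesis by (simp add: Div7_def eff_div_def)
  qed
  have below_D: "E \<le> D" if "E \<in> F" "?t E \<noteq> 0" for E
  proof (rule le_funI, rule le_funI)
    fix i P
    have "E i P \<le> 1" using that(2) mu_S_eq_0_if_not_squarefree[of E i P] by (cases "1 < E i P") auto
    moreover have "E i P = 0" if "\<not> (i < 7 \<and> P \<in> A)"
    proof (cases "i < 7")
      case True
      then have "P \<notin> div_support E" using that A(2)[OF \<open>E \<in> F\<close>] by auto
      then show ?thesis by (simp add: div_support_def)
    next
      case False
      then show ?thesis using Div7_vanish[of E i P] F(1) \<open>E \<in> F\<close> by auto
    qed
    ultimately show "E i P \<le> D i P" by (auto simp: D_def)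
  qed
  have "(\<Sum>E\<in>F. ?t E) = (\<Sum>E\<in>F \<inter> {E. E \<le> D}. ?t E)"
    using F(2) below_D by (intro sum.mono_neutral_right) auto
  also have "\<dots> \<le> (\<Sum>E | E \<le> D. ?t E)"
    by (intro sum_mono2 finite_Div7_below[OF D]) auto
  also have "\<dots> = (\<Sum>E | E \<le> D. \<Prod>P\<in>A. ?h P (\<lambda>i. E i P))"
  proof (intro sum.cong refl norm_mu_S_weight_eq_prod A(1) q)
    fix E assume "E \<in> {E. E \<le> D}"
    then show "E \<in> Div7" "div_support E \<subseteq> A"
      using Div7_downward_closed[OF D] div_support_mono[of E D] by (auto simp: div_support_def D_def)
  qed
  also have "\<dots> = (\<Prod>P\<in>A. \<Sum>v | v \<le> (\<lambda>i. D i P). ?h P v)"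
    using A(1) finite_column_support[OF D] by (intro sum_below_prod_columns finite_fun_le) (auto simp: D_def)
  also have "\<dots> = (\<Prod>P\<in>A. \<Sum>v | v \<le> (\<lambda>i. of_bool (i < 7)). ?h P v)"
    by (intro prod.cong refl) (simp add: D_def)
  finally show ?thesis .
qed

lemma local_euler_factor_le_exp:
  fixes x :: real
  assumes "0 \<le> x" "x \<le> 1"
  shows "(\<Sum>v | v \<le> (\<lambda>i. of_bool (i < 7)). \<bar>real_of_int (local_mu v)\<bar> * x ^ (\<Sum>i<7. v i))
    \<le> exp ((\<Sum>v | v \<le> (\<lambda>i. of_bool (i < 7)). \<bar>real_of_int (local_mu v)\<bar>) * x\<^sup>2)"
  unfolding local_mu_def
  by (rule order.trans[OF sum_sqfree_mobius_power_le exp_ge_add_one_self])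
    (simp_all add: assms prim_pattern_singleton)

lemma curve_points_q_ge_2:
  assumes "curve_points q dg"
  shows "2 \<le> q"
proof -
  obtain p n where p: "prime (p::nat)" "1 \<le> n" "q = p ^ n"
    using assms by (auto simp: curve_points_def)
  have "p ^ 1 \<le> p ^ n" using p(2) prime_gt_0_nat[OF p(1)] by (intro power_increasing) auto
  then show ?thesis using prime_ge_2_nat[OF p(1)] p(3) by simp
qed

lemma norm_sum_list_power_le:
  fixes ws :: "'a::{real_normed_div_algebra} list"
  assumes "\<forall>w\<in>set ws. norm w = r"
  shows "norm (\<Sum>w\<leftarrow>ws. w ^ n) \<le> real (length ws) * r ^ n"
  using assms
proof (induction ws)
  case (Cons a ws)
  have "norm (\<Sum>w\<leftarrow>a # ws. w ^ n) \<le> norm (a ^ n) + norm (\<Sum>w\<leftarrow>ws. w ^ n)"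
    by (simp add: norm_triangle_ineq)
  also have "\<dots> \<le> r ^ n + real (length ws) * r ^ n"
    using Cons by (simp add: norm_power)
  finally show ?case by (simp add: algebra_simps)
qed simp

lemma curve_points_card_deg_le:
  assumes cp: "curve_points q dg"
  shows "\<exists>K\<ge>0. \<forall>d\<ge>1. real (card {P. dg P = d}) \<le> K * real q ^ d"
proof -
  obtain ws :: "complex list" where ws: "\<forall>w\<in>set ws. cmod w = sqrt (real q)"
    "\<forall>n\<ge>1. of_nat (\<Sum>d | d dvd n. d * card {P. dg P = d}) = of_nat (q ^ n) + 1 - (\<Sum>w\<leftarrow>ws. w ^ n)"
    using cp unfolding curve_points_def by blast
  have q1: "1 \<le> real q" using curve_points_q_ge_2[OF cp] by simp
  let ?L = "real (length ws)"
  have "real (card {P. dg P = n}) \<le> (2 + ?L) * real q ^ n" if n: "1 \<le> n" for n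
  proof -
    have "card {P. dg P = n} \<le> n * card {P. dg P = n}" using n by simp
    also have "\<dots> \<le> (\<Sum>d | d dvd n. d * card {P. dg P = d})"
      using n by (intro member_le_sum finite_divisors_nat) auto
    finally have "real (card {P. dg P = n}) \<le> cmod (of_nat (\<Sum>d | d dvd n. d * card {P. dg P = d}))"
      by (simp only: norm_of_nat of_nat_le_iff)
    also have "\<dots> = cmod (of_nat (q ^ n) + 1 - (\<Sum>w\<leftarrow>ws. w ^ n))" using ws(2) n by simp
    also have "\<dots> \<le> cmod (of_nat (q ^ n) + 1 :: complex) + cmod (\<Sum>w\<leftarrow>ws. w ^ n)"
      by (rule norm_triangle_ineq4)
    also have "\<dots> \<le> (real q ^ n + 1) + ?L * sqrt (real q) ^ n"
    proof (rule add_mono)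
      have "cmod (of_nat (q ^ n + 1)) = real (q ^ n + 1)" by (rule norm_of_nat)
      then show "cmod (of_nat (q ^ n) + 1 :: complex) \<le> real q ^ n + 1" by (simp add: add.commute)
    qed (rule norm_sum_list_power_le[OF ws(1)])
    also have "\<dots> \<le> (real q ^ n + real q ^ n) + ?L * real q ^ n"
      using q1 by (intro add_mono mult_left_mono power_mono one_le_power real_le_lsqrt)
        (auto simp: power2_eq_square)
    finally show ?thesis by (simp add: algebra_simps)
  qed
  then show ?thesis by (intro exI[of _ "2 + ?L"]) auto
qed

lemma sum_power_deg_le:
  fixes dg :: "'p \<Rightarrow> nat" and c y K :: real
  assumes count: "\<And>d. 1 \<le> d \<Longrightarrow> real (card {P. dg P = d}) \<le> K * c ^ d"
    and fin: "\<And>d. finite {P. dg P = d}" and dg: "\<And>P. 1 \<le> dg P"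
    and K: "0 \<le> K" and y: "0 \<le> y" and c: "0 \<le> c" "c * y < 1" and A: "finite A"
  shows "(\<Sum>P\<in>A. y ^ dg P) \<le> K / (1 - c * y)"
proof -
  have "(\<Sum>P\<in>A. y ^ dg P) = (\<Sum>d\<in>dg ` A. \<Sum>P\<in>{P\<in>A. dg P = d}. y ^ dg P)"
    by (rule sum.image_gen[OF A])
  also have "\<dots> = (\<Sum>d\<in>dg ` A. real (card {P\<in>A. dg P = d}) * y ^ d)"
    by (intro sum.cong refl) simp
  also have "\<dots> \<le> (\<Sum>d\<in>dg ` A. K * (c * y) ^ d)"
  proof (rule sum_mono)
    fix d assume "d \<in> dg ` A"
    then have "1 \<le> d" using dg by auto
    have "card {P\<in>A. dg P = d} \<le> card {P. dg P = d}" by (rule card_mono[OF fin]) auto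
    then have "real (card {P\<in>A. dg P = d}) \<le> K * c ^ d"
      using count[OF \<open>1 \<le> d\<close>] by linarith
    then have "real (card {P\<in>A. dg P = d}) * y ^ d \<le> K * c ^ d * y ^ d"
      using y by (simp add: mult_right_mono)
    then show "real (card {P\<in>A. dg P = d}) * y ^ d \<le> K * (c * y) ^ d"
      by (simp add: power_mult_distrib mult.assoc)
  qed
  also have "\<dots> \<le> K * (\<Sum>n. (c * y) ^ n)"
    using K c y A by (simp add: sum_distrib_left[symmetric] mult_left_mono sum_le_suminf)
  also have "\<dots> = K / (1 - c * y)" using c y by (simp add: suminf_geometric)
  finally show ?thesis .
qed

lemma curve_points_sum_powr_deg_bounded:
  assumes cp: "curve_points q dg" and \<sigma>: "1 < \<sigma>"
  shows "\<exists>B. \<forall>A. finite A \<longrightarrow> (\<Sum>P\<in>A. real q powr (- \<sigma> * real (dg P))) \<le> B"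
proof -
  obtain K where K: "0 \<le> K" "\<And>d. 1 \<le> d \<Longrightarrow> real (card {P. dg P = d}) \<le> K * real q ^ d"
    using curve_points_card_deg_le[OF cp] by blast
  have q: "2 \<le> q" by (rule curve_points_q_ge_2[OF cp])
  define y where "y = real q powr - \<sigma>"
  have "real q * y = real q powr (1 - \<sigma>)" using q by (simp add: y_def powr_diff powr_minus_divide)
  also have "\<dots> < 1" using q \<sigma> by (intro powr_less_one) auto
  finally have qy: "real q * y < 1" .
  have "(\<Sum>P\<in>A. real q powr (- \<sigma> * real (dg P))) \<le> K / (1 - real q * y)" if "finite A" for A
  proof -
    have "(\<Sum>P\<in>A. real q powr (- \<sigma> * real (dg P))) = (\<Sum>P\<in>A. y ^ dg P)"
      using q by (simp add: y_def powr_power mult.commute)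
    also have "\<dots> \<le> K / (1 - real q * y)"
      using cp K qy that by (intro sum_power_deg_le) (auto simp: curve_points_def y_def)
    finally show ?thesis .
  qed
  then show ?thesis by blast
qed

lemma bdd_above_partial_sums_mu_S:
  fixes dg :: "'p \<Rightarrow> nat"
  assumes cp: "curve_points q dg" and \<epsilon>: "0 < \<epsilon>"
  shows "bdd_above (sum (\<lambda>E. norm (mu_S E) * real q powr (- (1/2 + \<epsilon>) * real (total_deg dg E)))
           ` {F. F \<subseteq> (Div7 :: (nat \<Rightarrow> 'p \<Rightarrow> nat) set) \<and> finite F})"
proof -
  define s where "s = 1/2 + \<epsilon>"
  have q: "2 \<le> q" by (rule curve_points_q_ge_2[OF cp])
  obtain B where B: "\<And>A. finite A \<Longrightarrow> (\<Sum>P\<in>A. real q powr (- (2 * s) * real (dg P))) \<le> B"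
    using curve_points_sum_powr_deg_bounded[OF cp, of "2 * s"] \<epsilon> by (auto simp: s_def)
  define C where "C = (\<Sum>v | v \<le> (\<lambda>i. of_bool (i < 7)). \<bar>real_of_int (local_mu v)\<bar>)"
  define x where "x P = real q powr (- s * real (dg P))" for P
  have x: "0 \<le> x P" "x P \<le> 1" for P
  proof -
    have "- s * real (dg P) \<le> 0" using \<epsilon> by (intro mult_nonpos_nonneg) (auto simp: s_def)
    then show "0 \<le> x P" "x P \<le> 1" using q powr_mono[of "- s * real (dg P)" 0 "real q"] by (auto simp: x_def)
  qed
  have x2: "x P ^ 2 = real q powr (- (2 * s) * real (dg P))" for P
    using q by (simp add: x_def powr_power algebra_simps)
  have "(\<Sum>E\<in>F. norm (mu_S E) * real q powr (- s * real (total_deg dg E))) \<le> exp (C * B)"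
    if F: "F \<subseteq> Div7" "finite F" for F :: "(nat \<Rightarrow> 'p \<Rightarrow> nat) set"
  proof -
    define A where "A = (\<Union>E\<in>F. div_support E)"
    have A: "finite A" using F finite_div_support by (auto simp: A_def)
    have "(\<Sum>E\<in>F. norm (mu_S E) * real q powr (- s * real (total_deg dg E)))
        \<le> (\<Prod>P\<in>A. \<Sum>v | v \<le> (\<lambda>i. of_bool (i < 7)).
              \<bar>real_of_int (local_mu v)\<bar> * x P ^ (\<Sum>i<7. v i))"
      unfolding x_def using F A q by (intro partial_sum_mu_S_le_euler_product) (auto simp: A_def)
    also have "\<dots> \<le> (\<Prod>P\<in>A. exp (C * x P ^ 2))"
      unfolding C_def using x by (intro prod_mono conjI sum_nonneg local_euler_factor_le_exp) auto
    also have "\<dots> = exp (C * (\<Sum>P\<in>A. x P ^ 2))" by (simp add: exp_sum[OF A] sum_distrib_left)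
    also have "\<dots> \<le> exp (C * B)"
      using B[OF A] by (simp add: x2 C_def mult_left_mono)
    finally show ?thesis .
  qed
  then show ?thesis by (intro bdd_aboveI[of _ "exp (C * B)"]) (auto simp: s_def)
qed

theorem mainTheorem11:
  fixes q :: nat and dg :: "'p \<Rightarrow> nat" and \<epsilon> :: real
  assumes "curve_points q dg" and "\<epsilon> > 0"
  shows "(\<lambda>E. norm (mu_S E) * real q powr (- (1/2 + \<epsilon>) * real (total_deg dg E)))
           summable_on (Div7 :: (nat \<Rightarrow> 'p \<Rightarrow> nat) set)"
  by (rule nonneg_bdd_above_summable_on[OF _ bdd_above_partial_sums_mu_S[OF assms]]) simp

end
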